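(* Let $n\ge2$, $\mathbf{a}\in\mathbb{C}^n$, $\beta>0$ and $f(\mathbf{z})=\frac12|\mathbf{a}^*\mathbf{z}|^2+\frac{\beta}{2}\|\mathbf{z}\|_4^4$ on $\mathbb{CS}^{n-1}$. Suppose that $\|\mathbf{a}\|_\infty>\frac12\|\mathbf{a}\|_1$ and that it is not the case that $\mathbf{a}$ has exactly one nonzero component with $\|\mathbf{a}\|_2^2\ge2\beta/(n-1)$. Then every consistent local minimizer of $f$ on $\mathbb{CS}^{n-1}$ is a global minimizer.
   Context: $\mathbb{CS}^{n-1}=\{\mathbf{z}\in\mathbb{C}^n:\|\mathbf{z}\|_2=1\}$. A stationary point $\mathbf{z}$ (i.e. $(\mathbf{a}^*\mathbf{z})\mathbf{a}+2\beta\,\mathrm{diag}(|z_1|^2,\dots,|z_n|^2)\mathbf{z}=2\lambda\mathbf{z}$ with $2\lambda=|\mathbf{a}^*\mathbf{z}|^2+2\beta\|\mathbf{z}\|_4^4$) is called consistent if $\bar a_kz_k\in\mathbb{R}$ for all $k$ with $a_k\neq0$ and $z_k\in\mathbb{R}$ for all $k$ with $a_k=0$. *)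

theory Defs
  imports "HOL-Analysis.Analysis"
begin

text \<open>Vectors in C^n are modelled as complex^'n; the norm on this type is the Euclidean 2-norm.\<close>

definition adj_dot :: "complex^'n \<Rightarrow> complex^'n \<Rightarrow> complex" where
  "adj_dot a z = (\<Sum>k\<in>UNIV. cnj (a$k) * z$k)"

definition norm4_pow4 :: "complex^'n \<Rightarrow> real" where
  "norm4_pow4 z = (\<Sum>k\<in>UNIV. (cmod (z$k))^4)"

definition norm1 :: "complex^'n \<Rightarrow> real" where
  "norm1 a = (\<Sum>k\<in>UNIV. cmod (a$k))"

definition norm_inf :: "complex^'n \<Rightarrow> real" where
  "norm_inf a = Max (range (\<lambda>k. cmod (a$k)))"

definition fobj :: "complex^'n \<Rightarrow> real \<Rightarrow> complex^'n \<Rightarrow> real" where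
  "fobj a \<beta> z = 1/2 * (cmod (adj_dot a z))^2 + \<beta>/2 * norm4_pow4 z"

text \<open>Stationary point equation, componentwise:
  (a^* z) a_k + 2 beta |z_k|^2 z_k = 2 lambda z_k with 2 lambda = |a^* z|^2 + 2 beta ||z||_4^4.\<close>
definition stationary_pt :: "complex^'n \<Rightarrow> real \<Rightarrow> complex^'n \<Rightarrow> bool" where
  "stationary_pt a \<beta> z \<longleftrightarrow> norm z = 1 \<and>
     (\<forall>k. adj_dot a z * a$k + complex_of_real (2 * \<beta> * (cmod (z$k))^2) * z$k
          = complex_of_real ((cmod (adj_dot a z))^2 + 2 * \<beta> * norm4_pow4 z) * z$k)"

definition consistent_pt :: "complex^'n \<Rightarrow> real \<Rightarrow> complex^'n \<Rightarrow> bool" where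
  "consistent_pt a \<beta> z \<longleftrightarrow> stationary_pt a \<beta> z \<and>
     (\<forall>k. (a$k \<noteq> 0 \<longrightarrow> cnj (a$k) * z$k \<in> \<real>) \<and> (a$k = 0 \<longrightarrow> z$k \<in> \<real>))"

definition local_min_on :: "'a::metric_space set \<Rightarrow> ('a \<Rightarrow> real) \<Rightarrow> 'a \<Rightarrow> bool" where
  "local_min_on S f z \<longleftrightarrow> z \<in> S \<and> (\<exists>e>0. \<forall>w\<in>S. dist w z < e \<longrightarrow> f z \<le> f w)"

definition global_min_on :: "'a set \<Rightarrow> ('a \<Rightarrow> real) \<Rightarrow> 'a \<Rightarrow> bool" where
  "global_min_on S f z \<longleftrightarrow> z \<in> S \<and> (\<forall>w\<in>S. f z \<le> f w)"

end

(* At a consistent stationary point z the number c = a^* z is real.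

   If c = 0, stationarity forces all nonzero |z_k| to be equal, so the coordinate m where a
   dominates (|a_m| > sum of the other |a_k|) must vanish in z. Explicit perturbations then
   decrease f arbitrarily close to z: rotating the phase of some z_k while compensating in z_m,
   filling two zero coordinates of z along a direction orthogonal to a, filling a zero coordinate
   where a vanishes, or pushing z_m when |a_m|^2 < 2 beta ||z||_4^4. The last case is what the
   hypothesis on vectors a with a single nonzero entry rules out.

   If c <> 0, wlog c > 0 after replacing z by -z. Small opposite phase rotations show that at most
   one term cnj a_p z_p is positive, and all z_k are nonzero. Stationarity then exhibits
   2 f(w) - 2 f(z) as a sum of nonnegative terms via a weighted Cauchy-Schwarz inequality. *)

theory Submission
  imports Defs
begin

section \<open>Coordinatewise identities\<close>

lemma power2_norm_vec: "(norm (x::complex^'n))\<^sup>2 = (\<Sum>k\<in>UNIV. (cmod (x$k))\<^sup>2)"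
  unfolding norm_vec_def L2_set_def by (simp add: sum_nonneg)

lemma adj_dot_add: "adj_dot a (x + y) = adj_dot a x + adj_dot a y"
  unfolding adj_dot_def by (simp add: distrib_left sum.distrib)

lemma adj_dot_scaleR: "adj_dot a (r *\<^sub>R x) = of_real r * adj_dot a x"
  unfolding adj_dot_def vector_scaleR_component
  by (simp add: sum_distrib_left scaleR_conv_of_real algebra_simps)

lemma adj_dot_uminus: "adj_dot a (- x) = - adj_dot a x"
  unfolding adj_dot_def by (simp add: sum_negf)

lemma adj_dot_axis: "adj_dot a (axis k u) = cnj (a$k) * u"
  unfolding adj_dot_def axis_def by (simp add: if_distrib cong: if_cong)

lemma adj_dot_split: "adj_dot a z = cnj (a$p) * z$p + (\<Sum>k\<in>UNIV - {p}. cnj (a$k) * z$k)"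
  unfolding adj_dot_def by (simp add: sum.remove)

lemma adj_dot_phase_mult:
  "adj_dot a (\<chi> k. \<theta> k * z$k) = adj_dot a z + (\<Sum>k\<in>UNIV. cnj (a$k) * z$k * (\<theta> k - 1))"
  unfolding adj_dot_def by (simp add: sum.distrib[symmetric] algebra_simps)

lemma norm4_pow4_scaleR: "norm4_pow4 (r *\<^sub>R x) = r^4 * norm4_pow4 x"
  unfolding norm4_pow4_def by (simp add: sum_distrib_left power_mult_distrib)

lemma norm4_pow4_uminus: "norm4_pow4 (- x) = norm4_pow4 x"
  unfolding norm4_pow4_def by simp

lemma norm4_pow4_nonneg: "norm4_pow4 x \<ge> 0"
  unfolding norm4_pow4_def by (simp add: sum_nonneg)

lemma norm4_pow4_pos: "x \<noteq> 0 \<Longrightarrow> norm4_pow4 x > 0"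
  unfolding norm4_pow4_def by (auto simp: vec_eq_iff intro!: sum_pos2)

lemma norm4_pow4_le_norm_pow4: "norm4_pow4 x \<le> (norm x)^4"
proof -
  have "norm4_pow4 x = (\<Sum>k\<in>UNIV. (cmod (x$k))\<^sup>2 * (cmod (x$k))\<^sup>2)"
    unfolding norm4_pow4_def by (simp add: power4_eq_xxxx power2_eq_square mult.assoc)
  also have "\<dots> \<le> (\<Sum>k\<in>UNIV. (cmod (x$k))\<^sup>2 * (norm x)\<^sup>2)"
    by (intro sum_mono mult_left_mono power_mono Finite_Cartesian_Product.norm_nth_le) auto
  also have "\<dots> = (norm x)\<^sup>2 * (norm x)\<^sup>2"
    by (simp only: power2_norm_vec sum_distrib_right)
  finally show ?thesis
    by (simp add: power4_eq_xxxx power2_eq_square mult.assoc)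
qed

lemma norms_add_disjoint_support:
  assumes "\<And>k. x$k = 0 \<or> y$k = 0"
  shows "(norm (x + y))\<^sup>2 = (norm x)\<^sup>2 + (norm y)\<^sup>2"
    and "norm4_pow4 (x + y) = norm4_pow4 x + norm4_pow4 y"
proof -
  have "(cmod (x$k + y$k))^p = (cmod (x$k))^p + (cmod (y$k))^p" if "p > 0" for k p
    using assms[of k] that by auto
  then show "(norm (x + y))\<^sup>2 = (norm x)\<^sup>2 + (norm y)\<^sup>2"
    and "norm4_pow4 (x + y) = norm4_pow4 x + norm4_pow4 y"
    unfolding power2_norm_vec norm4_pow4_def by (simp_all add: sum.distrib)
qed

lemma norms_axis:
  "(norm (axis k u :: complex^'n))\<^sup>2 = (cmod u)\<^sup>2" "norm4_pow4 (axis k u :: complex^'n) = (cmod u)^4"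
proof -
  have "(cmod ((axis k u :: complex^'n)$i))^p = (if i = k then (cmod u)^p else 0)" if "p > 0" for i p
    using that by (simp add: axis_def)
  then show "(norm (axis k u :: complex^'n))\<^sup>2 = (cmod u)\<^sup>2" "norm4_pow4 (axis k u :: complex^'n) = (cmod u)^4"
    unfolding power2_norm_vec norm4_pow4_def by simp_all
qed

lemma norms_phase_mult:
  assumes "\<And>k. cmod (\<theta> k) = 1"
  shows "norm (\<chi> k. \<theta> k * z$k) = norm z" and "norm4_pow4 (\<chi> k. \<theta> k * z$k) = norm4_pow4 z"
  using assms unfolding norm_vec_def norm4_pow4_def by (simp_all add: norm_mult)

lemma fobj_uminus: "fobj a \<beta> (- x) = fobj a \<beta> x"
  unfolding fobj_def by (simp add: adj_dot_uminus norm4_pow4_uminus)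

lemma fobj_sgn:
  "fobj a \<beta> (sgn w) = (cmod (adj_dot a w))\<^sup>2 / (2 * (norm w)\<^sup>2) + \<beta> * norm4_pow4 w / (2 * (norm w)^4)"
  unfolding fobj_def sgn_div_norm adj_dot_scaleR norm4_pow4_scaleR
  by (simp add: norm_mult norm_divide power_mult_distrib power_divide field_simps)

lemma tendsto_axis_0:
  assumes "(f \<longlongrightarrow> 0) F"
  shows "((\<lambda>t. axis k (f t)) \<longlongrightarrow> 0) F"
proof -
  have "((\<lambda>t. if i = k then f t else 0) \<longlongrightarrow> 0) F" for i
    using assms by (cases "i = k") simp_all
  then have "((\<lambda>t. \<chi> i. if i = k then f t else 0) \<longlongrightarrow> (\<chi> i. 0)) F"
    by (rule tendsto_vec_lambda)
  then show ?thesis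
    by (simp add: axis_def zero_vec_def)
qed

lemma tendsto_phase_mult:
  fixes z :: "complex^'n"
  assumes "\<And>k. ((\<lambda>t. \<theta> t k) \<longlongrightarrow> 1) F"
  shows "((\<lambda>t. \<chi> k. \<theta> t k * z$k) \<longlongrightarrow> z) F"
proof -
  have "((\<lambda>t. \<chi> k. \<theta> t k * z$k) \<longlongrightarrow> (\<chi> k. 1 * z$k)) F"
    by (intro tendsto_vec_lambda tendsto_mult assms tendsto_const)
  then show ?thesis
    by simp
qed

section \<open>Descent directions\<close>

lemma not_local_min_onI:
  fixes z :: "'a::metric_space"
  assumes "(\<gamma> \<longlongrightarrow> z) F" and "F \<noteq> bot" and "\<forall>\<^sub>F t in F. \<gamma> t \<in> S \<and> f (\<gamma> t) < f z"
  shows "\<not> local_min_on S f z"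
proof
  assume "local_min_on S f z"
  then obtain e where "e > 0" and min: "\<forall>w\<in>S. dist w z < e \<longrightarrow> f z \<le> f w"
    unfolding local_min_on_def by blast
  have "\<forall>\<^sub>F t in F. dist (\<gamma> t) z < e"
    using assms(1) \<open>e > 0\<close> by (rule tendstoD)
  with assms(3) have "\<forall>\<^sub>F t in F. False"
    by eventually_elim (use min in force)
  with assms(2) show False
    by (simp add: eventually_False)
qed

lemma local_min_on_uminus:
  fixes f :: "'a::real_normed_vector \<Rightarrow> real"
  assumes "\<And>w. f (- w) = f w" and "\<And>w. w \<in> S \<Longrightarrow> - w \<in> S" and "local_min_on S f z"
  shows "local_min_on S f (- z)"
proof -
  obtain e where "z \<in> S" "e > 0" and min: "\<forall>w\<in>S. dist w z < e \<longrightarrow> f z \<le> f w"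
    using assms(3) unfolding local_min_on_def by blast
  have "f (- z) \<le> f w" if "w \<in> S" "dist w (- z) < e" for w
    using min assms(2)[OF that(1)] that(2) assms(1)[of z] assms(1)[of w]
    by (metis dist_minus minus_minus)
  then show ?thesis
    unfolding local_min_on_def using assms(2) \<open>z \<in> S\<close> \<open>e > 0\<close> by blast
qed

lemma global_min_on_uminus:
  fixes f :: "'a::real_normed_vector \<Rightarrow> real"
  assumes "\<And>w. f (- w) = f w" and "\<And>w. w \<in> S \<Longrightarrow> - w \<in> S" and "global_min_on S f (- z)"
  shows "global_min_on S f z"
  using assms unfolding global_min_on_def by (metis minus_minus)

(* With P = |w|^2 - 1, normalising divides the quadratic part of f by 1 + P and the quartic
   part by (1 + P)^2. *)
lemma fobj_sgn_less:
  fixes z w :: "complex^'n"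
  assumes "norm z = 1" and "\<beta> > 0" and "adj_dot a w = adj_dot a z"
    and "(norm w)\<^sup>2 > 1" and "(norm w)\<^sup>2 - 1 < 2 * norm4_pow4 z"
    and "norm4_pow4 w \<le> norm4_pow4 z + ((norm w)\<^sup>2 - 1)\<^sup>2"
  shows "fobj a \<beta> (sgn w) < fobj a \<beta> z"
proof -
  define P where "P = (norm w)\<^sup>2 - 1"
  define C where "C = (cmod (adj_dot a z))\<^sup>2"
  define Q where "Q = norm4_pow4 z"
  have P: "P > 0" "P < 2 * Q" and N2: "(norm w)\<^sup>2 = 1 + P" and N4: "(norm w)^4 = (1 + P)\<^sup>2"
    using assms(4,5) by (auto simp: P_def Q_def power4_eq_xxxx power2_eq_square)
  have "Q + P\<^sup>2 < Q * (1 + P)\<^sup>2"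
  proof -
    have "P\<^sup>2 < 2 * Q * P"
      using P by (simp add: power2_eq_square)
    moreover have "Q * P\<^sup>2 \<ge> 0"
      using norm4_pow4_nonneg[of z] by (simp add: Q_def)
    ultimately show ?thesis
      by (simp add: power2_eq_square algebra_simps)
  qed
  then have "\<beta> * (Q + P\<^sup>2) < \<beta> * Q * (1 + P)\<^sup>2"
    using assms(2) by (simp add: mult.assoc)
  then have quartic: "\<beta> * (Q + P\<^sup>2) / (2 * (1 + P)\<^sup>2) < \<beta> * Q / 2"
    using P by (simp add: divide_less_eq)
  have "fobj a \<beta> (sgn w) \<le> C / (2 * (1 + P)) + \<beta> * (Q + P\<^sup>2) / (2 * (1 + P)\<^sup>2)"
    unfolding fobj_sgn N2 N4 assms(3) C_def Q_def using assms(2,6) P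
    by (simp add: P_def divide_right_mono)
  also have "\<dots> < C / 2 + \<beta> * Q / 2"
    using quartic P by (intro add_le_less_mono) (auto simp: C_def field_simps)
  also have "\<dots> = fobj a \<beta> z"
    by (simp add: fobj_def C_def Q_def)
  finally show ?thesis .
qed

lemma not_local_min_by_normalisation:
  fixes z :: "complex^'n" and w :: "real \<Rightarrow> complex^'n"
  assumes "norm z = 1" and "\<beta> > 0" and "(w \<longlongrightarrow> z) (at 0)"
    and "\<And>t. t \<noteq> 0 \<Longrightarrow> adj_dot a (w t) = adj_dot a z \<and> (norm (w t))\<^sup>2 > 1 \<and>
           norm4_pow4 (w t) \<le> norm4_pow4 z + ((norm (w t))\<^sup>2 - 1)\<^sup>2"
  shows "\<not> local_min_on (sphere 0 1) (fobj a \<beta>) z"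
proof (rule not_local_min_onI)
  have "z \<noteq> 0"
    using assms(1) by auto
  then show "((\<lambda>t. sgn (w t)) \<longlongrightarrow> z) (at 0)"
    using tendsto_sgn[OF assms(3)] assms(1) by (simp add: sgn_div_norm)
  have "((\<lambda>t. (norm (w t))\<^sup>2 - 1) \<longlongrightarrow> (norm z)\<^sup>2 - 1) (at 0)"
    by (intro tendsto_intros assms(3))
  moreover have "(norm z)\<^sup>2 - 1 < 2 * norm4_pow4 z"
    using norm4_pow4_pos[OF \<open>z \<noteq> 0\<close>] assms(1) by simp
  ultimately have "\<forall>\<^sub>F t in at 0. (norm (w t))\<^sup>2 - 1 < 2 * norm4_pow4 z"
    by (rule order_tendstoD)
  with eventually_neq_at_within[of "0::real" 0 UNIV]
  show "\<forall>\<^sub>F t in at 0. sgn (w t) \<in> sphere 0 1 \<and> fobj a \<beta> (sgn (w t)) < fobj a \<beta> z"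
  proof eventually_elim
    case (elim t)
    with assms(4)[of t] show ?case
      by (auto simp: norm_sgn intro!: fobj_sgn_less assms(1,2))
  qed
qed simp

lemma not_local_min_free_direction:
  fixes z d :: "complex^'n"
  assumes "norm z = 1" and "\<beta> > 0" and "d \<noteq> 0" and "adj_dot a d = 0"
    and "\<And>k. z$k = 0 \<or> d$k = 0"
  shows "\<not> local_min_on (sphere 0 1) (fobj a \<beta>) z"
proof -
  define w where "w t = z + t *\<^sub>R d" for t
  have lim: "(w \<longlongrightarrow> z) (at 0)"
    unfolding w_def[abs_def] by (auto intro!: tendsto_eq_intros)
  have "adj_dot a (w t) = adj_dot a z \<and> (norm (w t))\<^sup>2 > 1 \<and>
        norm4_pow4 (w t) \<le> norm4_pow4 z + ((norm (w t))\<^sup>2 - 1)\<^sup>2"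
    if "t \<noteq> 0" for t
  proof (intro conjI)
    have disjoint: "z$k = 0 \<or> (t *\<^sub>R d)$k = 0" for k
      using assms(5)[of k] by auto
    show "adj_dot a (w t) = adj_dot a z"
      by (simp add: w_def adj_dot_add adj_dot_scaleR assms(4))
    have N2: "(norm (w t))\<^sup>2 = 1 + t\<^sup>2 * (norm d)\<^sup>2"
      using norms_add_disjoint_support(1)[OF disjoint] assms(1) by (simp add: w_def power_mult_distrib)
    then show "(norm (w t))\<^sup>2 > 1"
      using that assms(3) by simp
    have "norm4_pow4 (w t) = norm4_pow4 z + t^4 * norm4_pow4 d"
      using norms_add_disjoint_support(2)[OF disjoint] by (simp add: w_def norm4_pow4_scaleR)
    also have "\<dots> \<le> norm4_pow4 z + t^4 * (norm d)^4"
      by (intro add_left_mono mult_left_mono norm4_pow4_le_norm_pow4) simp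
    also have "\<dots> = norm4_pow4 z + ((norm (w t))\<^sup>2 - 1)\<^sup>2"
      unfolding N2 by (simp add: power_mult_distrib flip: power_mult)
    finally show "norm4_pow4 (w t) \<le> norm4_pow4 z + ((norm (w t))\<^sup>2 - 1)\<^sup>2" .
  qed
  with not_local_min_by_normalisation[OF assms(1,2) lim] show ?thesis .
qed

lemma not_local_min_free_coordinate:
  fixes z :: "complex^'n"
  assumes "norm z = 1" and "\<beta> > 0" and "a$k = 0" and "z$k = 0"
  shows "\<not> local_min_on (sphere 0 1) (fobj a \<beta>) z"
proof (rule not_local_min_free_direction[OF assms(1,2)])
  show "axis k (1::complex) \<noteq> 0" and "adj_dot a (axis k 1) = 0"
    using assms(3) by (simp_all add: adj_dot_axis)
  show "z$i = 0 \<or> (axis k (1::complex))$i = 0" for i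
    using assms(4) by (cases "i = k") (simp_all add: axis_def)
qed

lemma not_local_min_two_zero_coordinates:
  fixes z :: "complex^'n"
  assumes "norm z = 1" and "\<beta> > 0" and "z$m = 0" and "z$k = 0" and "k \<noteq> m" and "a$k \<noteq> 0"
  shows "\<not> local_min_on (sphere 0 1) (fobj a \<beta>) z"
proof (rule not_local_min_free_direction[OF assms(1,2)])
  let ?d = "axis m (cnj (a$k)) + axis k (- cnj (a$m))"
  show "?d \<noteq> 0"
    using assms(5,6) by (auto simp: vec_eq_iff axis_def)
  show "adj_dot a ?d = 0"
    by (simp add: adj_dot_add adj_dot_axis)
  show "z$i = 0 \<or> ?d$i = 0" for i
    using assms(3,4) by (auto simp: axis_def)
qed

lemma fobj_sgn_axis_less:
  fixes z :: "complex^'n"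
  assumes "norm z = 1" and "adj_dot a z = 0" and "z$m = 0" and "t \<noteq> 0"
    and "(cmod (a$m))\<^sup>2 + t\<^sup>2 * ((cmod (a$m))\<^sup>2 + \<beta> - \<beta> * norm4_pow4 z) < 2 * \<beta> * norm4_pow4 z"
  shows "fobj a \<beta> (sgn (z + axis m (of_real t))) < fobj a \<beta> z"
proof -
  define \<alpha> where "\<alpha> = cmod (a$m)"
  define Q where "Q = norm4_pow4 z"
  define w where "w = z + axis m (complex_of_real t)"
  have disjoint: "z$i = 0 \<or> (axis m (complex_of_real t))$i = 0" for i
    using assms(3) by (auto simp: axis_def)
  have N2: "(norm w)\<^sup>2 = 1 + t\<^sup>2"
    using norms_add_disjoint_support(1)[OF disjoint] assms(1) by (simp add: w_def norms_axis)
  have N4: "(norm w)^4 = (1 + t\<^sup>2)\<^sup>2"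
    unfolding N2[symmetric] by (simp flip: power_mult)
  have q: "norm4_pow4 w = Q + t^4"
    using norms_add_disjoint_support(2)[OF disjoint] by (simp add: w_def norms_axis Q_def)
  have c: "(cmod (adj_dot a w))\<^sup>2 = \<alpha>\<^sup>2 * t\<^sup>2"
    using assms(2) by (simp add: w_def adj_dot_add adj_dot_axis norm_mult \<alpha>_def power_mult_distrib)
  have denom: "1 + t\<^sup>2 > 0"
    by (simp add: add_pos_nonneg)
  have "\<alpha>\<^sup>2 * t\<^sup>2 * (1 + t\<^sup>2) + \<beta> * (Q + t^4) - \<beta> * Q * (1 + t\<^sup>2)\<^sup>2
        = t\<^sup>2 * (\<alpha>\<^sup>2 + t\<^sup>2 * (\<alpha>\<^sup>2 + \<beta> - \<beta> * Q) - 2 * \<beta> * Q)"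
    by (simp add: power2_eq_square power4_eq_xxxx algebra_simps)
  also have "\<dots> < 0"
    using assms(4,5) by (simp add: mult_pos_neg \<alpha>_def Q_def)
  finally have "(\<alpha>\<^sup>2 * t\<^sup>2 * (1 + t\<^sup>2) + \<beta> * (Q + t^4)) / (2 * (1 + t\<^sup>2)\<^sup>2) < \<beta> * Q / 2"
    using denom by (simp add: divide_less_eq)
  moreover have "fobj a \<beta> (sgn w) = (\<alpha>\<^sup>2 * t\<^sup>2 * (1 + t\<^sup>2) + \<beta> * (Q + t^4)) / (2 * (1 + t\<^sup>2)\<^sup>2)"
  proof -
    have "\<alpha>\<^sup>2 * t\<^sup>2 / (2 * (1 + t\<^sup>2)) = \<alpha>\<^sup>2 * t\<^sup>2 * (1 + t\<^sup>2) / (2 * (1 + t\<^sup>2)\<^sup>2)"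
      using denom by (simp add: power2_eq_square)
    then show ?thesis
      unfolding fobj_sgn N2 N4 q c by (simp add: add_divide_distrib)
  qed
  moreover have "fobj a \<beta> z = \<beta> * Q / 2"
    by (simp add: fobj_def assms(2) Q_def)
  ultimately show ?thesis
    unfolding w_def by linarith
qed

lemma not_local_min_single_coordinate:
  fixes z :: "complex^'n"
  assumes "norm z = 1" and "\<beta> > 0" and "adj_dot a z = 0" and "z$m = 0"
    and "(cmod (a$m))\<^sup>2 < 2 * \<beta> * norm4_pow4 z"
  shows "\<not> local_min_on (sphere 0 1) (fobj a \<beta>) z"
proof (rule not_local_min_onI)
  define w where "w t = z + axis m (complex_of_real t)" for t
  have "(w \<longlongrightarrow> z + 0) (at 0)"
    unfolding w_def[abs_def]
    by (intro tendsto_add tendsto_axis_0 tendsto_const) (rule tendsto_eq_intros, auto)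
  moreover have "z \<noteq> 0"
    using assms(1) by auto
  ultimately show "((\<lambda>t. sgn (w t)) \<longlongrightarrow> z) (at 0)"
    using tendsto_sgn[of w z] assms(1) by (simp add: sgn_div_norm)
  let ?g = "\<lambda>t. (cmod (a$m))\<^sup>2 + t\<^sup>2 * ((cmod (a$m))\<^sup>2 + \<beta> - \<beta> * norm4_pow4 z)"
  have "(?g \<longlongrightarrow> ?g 0) (at 0)"
    by (intro tendsto_intros)
  then have "\<forall>\<^sub>F t in at 0. ?g t < 2 * \<beta> * norm4_pow4 z"
    using assms(5) by (intro order_tendstoD) simp_all
  with eventually_neq_at_within[of "0::real" 0 UNIV]
  show "\<forall>\<^sub>F t in at 0. sgn (w t) \<in> sphere 0 1 \<and> fobj a \<beta> (sgn (w t)) < fobj a \<beta> z"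
  proof eventually_elim
    case (elim t)
    then have "(w t)$m \<noteq> 0"
      using assms(4) by (simp add: w_def)
    then have "w t \<noteq> 0"
      by auto
    with elim show ?case
      unfolding w_def using fobj_sgn_axis_less[OF assms(1,3,4)] by (simp add: norm_sgn)
  qed
qed simp

section \<open>Phase rotations\<close>

(* A rational parametrisation of the unit circle: it keeps the phase-rotation computations
   algebraic. *)
definition cayley :: "real \<Rightarrow> complex" where
  "cayley x = (1 + \<i> * of_real x) / (1 - \<i> * of_real x)"

lemma cayley_denom_nonzero: "1 - \<i> * of_real x \<noteq> 0"
  by (simp add: complex_eq_iff)

lemma norm_cayley: "cmod (cayley x) = 1"
proof -
  have "cnj (1 - \<i> * of_real x) = 1 + \<i> * of_real x"
    by simp
  then have "cmod (1 + \<i> * of_real x) = cmod (1 - \<i> * of_real x)"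
    by (metis complex_mod_cnj)
  then show ?thesis
    using cayley_denom_nonzero[of x] by (simp add: cayley_def norm_divide)
qed

lemma cayley_minus_one: "cayley x - 1 = 2 * \<i> * of_real x / (1 - \<i> * of_real x)"
  using cayley_denom_nonzero[of x] by (simp add: cayley_def field_simps)

lemma cayley_eq_one_iff: "cayley x = 1 \<longleftrightarrow> x = 0"
  using cayley_minus_one[of x] cayley_denom_nonzero[of x] by auto

lemma tendsto_cayley: "(f \<longlongrightarrow> 0) F \<Longrightarrow> ((\<lambda>t. cayley (f t)) \<longlongrightarrow> 1) F"
  unfolding cayley_def by (auto intro!: tendsto_eq_intros)

(* Rotate the phase of z_k and restore a^* z through the vanishing coordinate z_m. *)
lemma not_local_min_phase_compensation:
  fixes z :: "complex^'n"
  assumes "norm z = 1" and "\<beta> > 0" and "z$m = 0" and "a$m \<noteq> 0" and "k \<noteq> m"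
    and "cnj (a$k) * z$k \<noteq> 0"
  shows "\<not> local_min_on (sphere 0 1) (fobj a \<beta>) z"
proof -
  define v where "v = cnj (a$k) * z$k"
  define \<theta> where "\<theta> t i = (if i = k then cayley t else 1)" for t i
  define rotated where "rotated t = (\<chi> i. \<theta> t i * z$i)" for t
  define u where "u t = - v * (cayley t - 1) / cnj (a$m)" for t
  define w where "w t = rotated t + axis m (u t)" for t
  have "((\<lambda>t. \<theta> t i) \<longlongrightarrow> 1) (at 0)" for i
    by (cases "i = k") (auto simp: \<theta>_def intro!: tendsto_cayley)
  moreover have "(u \<longlongrightarrow> 0) (at 0)"
    unfolding u_def using assms(4) by (auto intro!: tendsto_eq_intros tendsto_cayley)
  ultimately have lim: "(w \<longlongrightarrow> z + 0) (at 0)"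
    unfolding w_def[abs_def] rotated_def by (intro tendsto_add tendsto_phase_mult tendsto_axis_0)
  have "adj_dot a (w t) = adj_dot a z \<and> (norm (w t))\<^sup>2 > 1 \<and>
        norm4_pow4 (w t) \<le> norm4_pow4 z + ((norm (w t))\<^sup>2 - 1)\<^sup>2"
    if "t \<noteq> 0" for t
  proof (intro conjI)
    have phase: "cmod (\<theta> t i) = 1" for i
      by (simp add: \<theta>_def norm_cayley)
    have "(\<Sum>i\<in>UNIV. cnj (a$i) * z$i * (\<theta> t i - 1)) = (\<Sum>i\<in>UNIV. if i = k then v * (cayley t - 1) else 0)"
      by (rule sum.cong) (auto simp: \<theta>_def v_def)
    then have "adj_dot a (rotated t) = adj_dot a z + v * (cayley t - 1)"
      unfolding rotated_def adj_dot_phase_mult by simp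
    then show "adj_dot a (w t) = adj_dot a z"
      using assms(4) by (simp add: w_def adj_dot_add adj_dot_axis u_def)
    have disjoint: "(rotated t)$i = 0 \<or> (axis m (u t))$i = 0" for i
      using assms(3,5) by (cases "i = m") (auto simp: rotated_def \<theta>_def axis_def)
    have N2: "(norm (w t))\<^sup>2 = 1 + (cmod (u t))\<^sup>2"
      using norms_add_disjoint_support(1)[OF disjoint] norms_phase_mult(1)[of "\<theta> t", OF phase] assms(1)
      by (simp add: w_def rotated_def norms_axis)
    have "u t \<noteq> 0"
      using assms(4,6) that by (simp add: u_def v_def cayley_eq_one_iff)
    then show "(norm (w t))\<^sup>2 > 1"
      unfolding N2 by simp
    have "norm4_pow4 (w t) = norm4_pow4 z + (cmod (u t))^4"
      using norms_add_disjoint_support(2)[OF disjoint] norms_phase_mult(2)[of "\<theta> t", OF phase]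
      by (simp add: w_def rotated_def norms_axis)
    then show "norm4_pow4 (w t) \<le> norm4_pow4 z + ((norm (w t))\<^sup>2 - 1)\<^sup>2"
      unfolding N2 by (simp flip: power_mult)
  qed
  with not_local_min_by_normalisation[OF assms(1,2) lim[simplified]] show ?thesis .
qed

lemma cmod_sub_divide_less:
  assumes "c > 0" and "K > 0" and "K < 2 * c * Re D"
  shows "cmod (of_real c - of_real K / D) < c"
proof -
  have "D \<noteq> 0"
    using assms by auto
  have "K * (2 * c * Re D - K) > 0"
    using assms by (intro mult_pos_pos) auto
  have "(cmod (of_real c * D - of_real K))\<^sup>2 = (c * cmod D)\<^sup>2 - K * (2 * c * Re D - K)"
    unfolding power_mult_distrib cmod_power2 by (simp add: power2_eq_square algebra_simps)
  also have "\<dots> < (c * cmod D)\<^sup>2"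
    using \<open>K * (2 * c * Re D - K) > 0\<close> by linarith
  finally have "(cmod (of_real c * D - of_real K))\<^sup>2 < (c * cmod D)\<^sup>2" .
  then have "cmod (of_real c * D - of_real K) < c * cmod D"
    by (rule power2_less_imp_less) (use assms(1) in simp)
  moreover have "of_real c - of_real K / D = (of_real c * D - of_real K) / D"
    using \<open>D \<noteq> 0\<close> by (simp add: diff_divide_distrib)
  ultimately show ?thesis
    using \<open>D \<noteq> 0\<close> by (simp add: norm_divide divide_less_eq)
qed

lemma cayley_pair:
  fixes p q s :: real
  shows "of_real p * (cayley (s * q) - 1) + of_real q * (cayley (- (s * p)) - 1)
       = - of_real (2 * s\<^sup>2 * p * q * (p + q)) / ((1 - \<i> * of_real (s * q)) * (1 + \<i> * of_real (s * p)))"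
proof -
  have "1 - \<i> * of_real (s * q) \<noteq> 0" and "1 + \<i> * of_real (s * p) \<noteq> 0"
    by (simp_all add: complex_eq_iff)
  then show ?thesis
    unfolding cayley_minus_one by (simp add: divide_simps) (simp add: algebra_simps power2_eq_square)
qed

(* Rotating z_j and z_m by opposite small phases moves a^* z = c to c - K / D with K > 0
   and Re D > K / (2 c) (see cayley_pair), which is strictly shorter than c. *)
lemma cmod_adj_dot_opposite_rotations_less:
  fixes z :: "complex^'n" and j m :: 'n and p q s :: real
  defines "\<theta> \<equiv> \<lambda>i. if i = j then cayley (s * q) else if i = m then cayley (- (s * p)) else 1"
  assumes "adj_dot a z = of_real c" and "c > 0" and "j \<noteq> m"
    and "cnj (a$j) * z$j = of_real p" and "cnj (a$m) * z$m = of_real q" and "p > 0" and "q > 0"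
    and "s \<noteq> 0" and "s\<^sup>2 * p * q * (p + q) < c"
  shows "cmod (adj_dot a (\<chi> i. \<theta> i * z$i)) < c"
proof -
  define K where "K = 2 * s\<^sup>2 * p * q * (p + q)"
  define D where "D = (1 - \<i> * of_real (s * q)) * (1 + \<i> * of_real (s * p))"
  have "(\<Sum>i\<in>UNIV. cnj (a$i) * z$i * (\<theta> i - 1))
      = (\<Sum>i\<in>UNIV. (if i = j then of_real p * (cayley (s * q) - 1) else 0)
                  + (if i = m then of_real q * (cayley (- (s * p)) - 1) else 0))"
    by (rule sum.cong) (use assms(4-6) in \<open>auto simp: \<theta>_def\<close>)
  also have "\<dots> = - of_real K / D"
    by (simp add: sum.distrib cayley_pair K_def D_def)
  finally have adj: "adj_dot a (\<chi> i. \<theta> i * z$i) = of_real c - of_real K / D"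
    unfolding adj_dot_phase_mult assms(2) by simp
  have "K > 0"
    using assms(7-9) by (simp add: K_def)
  moreover have "K < 2 * c * Re D"
  proof -
    have "c \<le> c * (1 + s\<^sup>2 * p * q)"
      using assms(3,7,8) by simp
    then show ?thesis
      using assms(10) by (simp add: K_def D_def algebra_simps power2_eq_square)
  qed
  ultimately show ?thesis
    unfolding adj by (rule cmod_sub_divide_less[OF assms(3)])
qed

lemma not_local_min_two_positive_terms:
  fixes z :: "complex^'n"
  assumes "norm z = 1" and "adj_dot a z = of_real c" and "c > 0" and "j \<noteq> m"
    and "cnj (a$j) * z$j = of_real p" and "cnj (a$m) * z$m = of_real q" and "p > 0" and "q > 0"
  shows "\<not> local_min_on (sphere 0 1) (fobj a \<beta>) z"
proof (rule not_local_min_onI)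
  define \<theta> where
    "\<theta> s i = (if i = j then cayley (s * q) else if i = m then cayley (- (s * p)) else 1)" for s i
  define w where "w s = (\<chi> i. \<theta> s i * z$i)" for s
  have "((\<lambda>s. \<theta> s i) \<longlongrightarrow> 1) (at 0)" for i
    unfolding \<theta>_def by (cases "i = j"; cases "i = m") (auto intro!: tendsto_cayley tendsto_eq_intros)
  then show "(w \<longlongrightarrow> z) (at 0)"
    unfolding w_def[abs_def] by (rule tendsto_phase_mult)
  have "((\<lambda>s. s\<^sup>2 * p * q * (p + q)) \<longlongrightarrow> 0\<^sup>2 * p * q * (p + q)) (at 0)"
    by (intro tendsto_intros)
  then have "\<forall>\<^sub>F s in at 0. s\<^sup>2 * p * q * (p + q) < c"
    using assms(3) by (intro order_tendstoD) simp_all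
  with eventually_neq_at_within[of "0::real" 0 UNIV]
  show "\<forall>\<^sub>F s in at 0. w s \<in> sphere 0 1 \<and> fobj a \<beta> (w s) < fobj a \<beta> z"
  proof eventually_elim
    case (elim s)
    have phase: "cmod (\<theta> s i) = 1" for i
      by (simp add: \<theta>_def norm_cayley)
    have "cmod (adj_dot a (w s)) < c"
      unfolding w_def \<theta>_def using cmod_adj_dot_opposite_rotations_less[OF assms(2-8) elim] by simp
    then have "(cmod (adj_dot a (w s)))\<^sup>2 < c\<^sup>2"
      by (simp add: power_strict_mono)
    then have "fobj a \<beta> (w s) < fobj a \<beta> z"
      unfolding fobj_def w_def norms_phase_mult(2)[of "\<theta> s", OF phase] assms(2) by simp
    moreover have "w s \<in> sphere 0 1"
      unfolding w_def using norms_phase_mult(1)[of "\<theta> s", OF phase] assms(1) by simp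
    ultimately show ?case
      by blast
  qed
qed simp

section \<open>A global optimality certificate\<close>

lemma weighted_Cauchy_Schwarz_sum:
  fixes \<alpha> \<rho> r :: "'i \<Rightarrow> real"
  assumes "\<And>i. i \<in> I \<Longrightarrow> \<alpha> i \<ge> 0" and "\<And>i. i \<in> I \<Longrightarrow> \<rho> i > 0"
  shows "(\<Sum>i\<in>I. \<alpha> i * r i)\<^sup>2 \<le> (\<Sum>i\<in>I. \<alpha> i * \<rho> i) * (\<Sum>i\<in>I. \<alpha> i * (r i)\<^sup>2 / \<rho> i)"
proof -
  define f where "f i = sqrt (\<alpha> i * \<rho> i)" for i
  define g where "g i = sqrt (\<alpha> i / \<rho> i) * r i" for i
  have "f i * g i = \<alpha> i * r i" and "(f i)\<^sup>2 = \<alpha> i * \<rho> i" and "(g i)\<^sup>2 = \<alpha> i * (r i)\<^sup>2 / \<rho> i"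
    if "i \<in> I" for i
  proof -
    have "sqrt (\<alpha> i * \<rho> i) * sqrt (\<alpha> i / \<rho> i) = sqrt ((\<alpha> i)\<^sup>2)"
      using assms(2)[OF that] by (simp add: real_sqrt_mult[symmetric] power2_eq_square)
    then show "f i * g i = \<alpha> i * r i"
      using assms(1)[OF that] by (simp add: f_def g_def)
    show "(f i)\<^sup>2 = \<alpha> i * \<rho> i" and "(g i)\<^sup>2 = \<alpha> i * (r i)\<^sup>2 / \<rho> i"
      using assms(1,2)[OF that] by (simp_all add: f_def g_def power_mult_distrib)
  qed
  then have "(\<Sum>i\<in>I. f i * g i) = (\<Sum>i\<in>I. \<alpha> i * r i)"
    and "(\<Sum>i\<in>I. (f i)\<^sup>2) = (\<Sum>i\<in>I. \<alpha> i * \<rho> i)"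
    and "(\<Sum>i\<in>I. (g i)\<^sup>2) = (\<Sum>i\<in>I. \<alpha> i * (r i)\<^sup>2 / \<rho> i)"
    by (auto intro: sum.cong)
  moreover have "(\<Sum>i\<in>I. f i * g i)\<^sup>2 \<le> (\<Sum>i\<in>I. (f i)\<^sup>2) * (\<Sum>i\<in>I. (g i)\<^sup>2)"
    by (rule Cauchy_Schwarz_ineq_sum)
  ultimately show ?thesis
    by simp
qed

(* Cauchy-Schwarz in the form (Y + B)^2 <= (1 + S/c) (Y^2 + (c/S) B^2), with Y = X - B. *)
lemma square_le_split_bound:
  fixes c S B G X A :: real
  assumes "c > 0" and "S \<ge> 0" and "G \<ge> 0" and "B\<^sup>2 \<le> S * G"
    and "0 \<le> X" and "X - B \<le> A" and "0 \<le> A"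
  shows "c * X\<^sup>2 \<le> (c + S) * (A\<^sup>2 + c * G)"
proof (cases "X \<le> B")
  case True
  then have "X\<^sup>2 \<le> S * G"
    using assms(4,5) power_mono[OF True assms(5), of 2] by linarith
  then have "c * X\<^sup>2 \<le> c * (S * G)"
    using assms(1) by simp
  also have "\<dots> \<le> c * (S * G) + ((c + S) * A\<^sup>2 + c\<^sup>2 * G)"
    using assms(1-3) by simp
  also have "\<dots> = (c + S) * (A\<^sup>2 + c * G)"
    by (simp add: algebra_simps power2_eq_square)
  finally show ?thesis .
next
  case False
  then have A2: "(X - B)\<^sup>2 \<le> A\<^sup>2"
    using assms(6) by (intro power_mono) auto
  show ?thesis
  proof (cases "S = 0")
    case True
    then have "B = 0" using assms(4) by simp
    then show ?thesis
      using A2 True assms(1,3) by (simp add: add_increasing2)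
  next
    case False
    then have "S > 0" using assms(2) by simp
    have "S * (c * X\<^sup>2) + (S * (X - B) - c * B)\<^sup>2 = (c + S) * (S * (X - B)\<^sup>2 + c * B\<^sup>2)"
      by (simp add: power2_eq_square algebra_simps)
    then have "S * (c * X\<^sup>2) \<le> (c + S) * (S * (X - B)\<^sup>2 + c * B\<^sup>2)"
      by (metis le_add_same_cancel1 zero_le_power2)
    also have "\<dots> \<le> (c + S) * (S * A\<^sup>2 + c * (S * G))"
      using A2 assms(1,2,4) \<open>S > 0\<close>
      by (intro mult_left_mono add_mono mult_left_mono) auto
    also have "\<dots> = S * ((c + S) * (A\<^sup>2 + c * G))"
      by (simp add: algebra_simps)
    finally show ?thesis
      using \<open>S > 0\<close> by simp
  qed
qed

lemma adj_dot_sq_lower_bound: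
  fixes a w :: "complex^'n" and \<rho> :: "'n \<Rightarrow> real"
  assumes "c > 0" and "\<And>k. \<rho> k > 0"
    and "cmod (a$p) * \<rho> p = c + (\<Sum>k\<in>UNIV - {p}. cmod (a$k) * \<rho> k)"
  shows "c * cmod (a$p) * (cmod (w$p))\<^sup>2 / \<rho> p
           - c * (\<Sum>k\<in>UNIV - {p}. cmod (a$k) * (cmod (w$k))\<^sup>2 / \<rho> k)
         \<le> (cmod (adj_dot a w))\<^sup>2"
proof -
  define S where "S = (\<Sum>k\<in>UNIV - {p}. cmod (a$k) * \<rho> k)"
  define B where "B = (\<Sum>k\<in>UNIV - {p}. cmod (a$k) * cmod (w$k))"
  define G where "G = (\<Sum>k\<in>UNIV - {p}. cmod (a$k) * (cmod (w$k))\<^sup>2 / \<rho> k)"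
  have "S \<ge> 0" and "G \<ge> 0"
    unfolding S_def G_def using assms(2) by (auto intro!: sum_nonneg simp: less_imp_le)
  have CS: "B\<^sup>2 \<le> S * G"
    unfolding B_def S_def G_def by (rule weighted_Cauchy_Schwarz_sum) (use assms(2) in auto)
  have "cmod (\<Sum>k\<in>UNIV - {p}. cnj (a$k) * w$k) \<le> B"
    unfolding B_def by (rule order_trans[OF norm_sum]) (simp add: norm_mult)
  then have "cmod (a$p) * cmod (w$p) - B \<le> cmod (adj_dot a w)"
    using norm_diff_ineq[of "cnj (a$p) * w$p" "\<Sum>k\<in>UNIV - {p}. cnj (a$k) * w$k"]
    by (simp add: adj_dot_split[of a w p] norm_mult)
  from square_le_split_bound[OF assms(1) \<open>S \<ge> 0\<close> \<open>G \<ge> 0\<close> CS _ this]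
  have "c * (cmod (a$p) * cmod (w$p))\<^sup>2 \<le> (cmod (a$p) * \<rho> p) * ((cmod (adj_dot a w))\<^sup>2 + c * G)"
    by (simp add: assms(3) S_def)
  moreover have "cmod (a$p) * \<rho> p > 0"
    using assms(1) \<open>S \<ge> 0\<close> by (simp add: assms(3) S_def)
  ultimately have "cmod (a$p) * (c * cmod (a$p) * (cmod (w$p))\<^sup>2)
      \<le> cmod (a$p) * (\<rho> p * ((cmod (adj_dot a w))\<^sup>2 + c * G))"
    by (simp add: power_mult_distrib algebra_simps power2_eq_square)
  then have "c * cmod (a$p) * (cmod (w$p))\<^sup>2 \<le> \<rho> p * ((cmod (adj_dot a w))\<^sup>2 + c * G)"
    using \<open>cmod (a$p) * \<rho> p > 0\<close> assms(2)[of p] by (simp add: zero_less_mult_iff)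
  then have "c * cmod (a$p) * (cmod (w$p))\<^sup>2 / \<rho> p \<le> (cmod (adj_dot a w))\<^sup>2 + c * G"
    using assms(2)[of p] by (simp add: divide_le_eq mult.commute)
  then show ?thesis
    by (simp add: G_def)
qed

lemma adj_dot_sq_ge_weighted_sum:
  fixes a w :: "complex^'n" and \<rho> h :: "'n \<Rightarrow> real"
  assumes "c > 0" and "\<And>k. \<rho> k > 0"
    and "cmod (a$p) * \<rho> p = c + (\<Sum>k\<in>UNIV - {p}. cmod (a$k) * \<rho> k)"
    and "h p = c * cmod (a$p) / \<rho> p" and "\<And>k. k \<noteq> p \<Longrightarrow> h k = - c * cmod (a$k) / \<rho> k"
  shows "(\<Sum>k\<in>UNIV. h k * (cmod (w$k))\<^sup>2) \<le> (cmod (adj_dot a w))\<^sup>2"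
proof -
  have "(\<Sum>k\<in>UNIV - {p}. h k * (cmod (w$k))\<^sup>2)
      = - (c * (\<Sum>k\<in>UNIV - {p}. cmod (a$k) * (cmod (w$k))\<^sup>2 / \<rho> k))"
    unfolding sum_distrib_left sum_negf[symmetric] by (rule sum.cong) (simp_all add: assms(5))
  moreover have "(\<Sum>k\<in>UNIV. h k * (cmod (w$k))\<^sup>2)
      = h p * (cmod (w$p))\<^sup>2 + (\<Sum>k\<in>UNIV - {p}. h k * (cmod (w$k))\<^sup>2)"
    by (simp add: sum.remove)
  ultimately show ?thesis
    using adj_dot_sq_lower_bound[OF assms(1-3), of w] by (simp add: assms(4))
qed

(* The hypotheses are what stationarity gives at a consistent point whose only positive term
   cnj a_p z_p sits at p, with L = 2 lambda. Then |a^* w|^2 >= sum_k (L - 2 beta |z_k|^2) |w_k|^2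
   and beta |w_k|^4 >= 2 beta |z_k|^2 |w_k|^2 - beta |z_k|^4, which add up to 2 f(w) >= 2 f(z). *)
lemma global_min_certificate:
  fixes a z :: "complex^'n" and c \<beta> :: real
  defines "L \<equiv> c\<^sup>2 + 2 * \<beta> * norm4_pow4 z"
  assumes "\<beta> \<ge> 0" and "norm z = 1" and "adj_dot a z = of_real c" and "c > 0"
    and "\<And>k. z$k \<noteq> 0"
    and "cmod (a$p) * cmod (z$p) = c + (\<Sum>k\<in>UNIV - {p}. cmod (a$k) * cmod (z$k))"
    and "L - 2 * \<beta> * (cmod (z$p))\<^sup>2 = c * cmod (a$p) / cmod (z$p)"
    and "\<And>k. k \<noteq> p \<Longrightarrow> L - 2 * \<beta> * (cmod (z$k))\<^sup>2 = - c * cmod (a$k) / cmod (z$k)"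
  shows "global_min_on (sphere 0 1) (fobj a \<beta>) z"
  unfolding global_min_on_def
proof (intro conjI ballI)
  show "z \<in> sphere 0 1"
    using assms(3) by simp
  fix w :: "complex^'n"
  assume "w \<in> sphere 0 1"
  define \<rho> where "\<rho> k = cmod (z$k)" for k
  define r where "r k = cmod (w$k)" for k
  define h where "h k = L - 2 * \<beta> * (\<rho> k)\<^sup>2" for k
  have \<rho>: "\<rho> k > 0" for k
    using assms(6) by (simp add: \<rho>_def)
  have quadratic: "(\<Sum>k\<in>UNIV. h k * (r k)\<^sup>2) \<le> (cmod (adj_dot a w))\<^sup>2"
    unfolding r_def using assms(8,9)
    by (intro adj_dot_sq_ge_weighted_sum[OF assms(5) \<rho>]) (simp_all add: assms(7) h_def \<rho>_def)
  have quartic: "2 * \<beta> * (\<rho> k)\<^sup>2 * (r k)\<^sup>2 - \<beta> * (\<rho> k)^4 \<le> \<beta> * (r k)^4" for k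
  proof -
    have "\<beta> * (r k)^4 - (2 * \<beta> * (\<rho> k)\<^sup>2 * (r k)\<^sup>2 - \<beta> * (\<rho> k)^4) = \<beta> * ((r k)\<^sup>2 - (\<rho> k)\<^sup>2)\<^sup>2"
      by (simp add: power2_eq_square power4_eq_xxxx algebra_simps)
    moreover have "\<beta> * ((r k)\<^sup>2 - (\<rho> k)\<^sup>2)\<^sup>2 \<ge> 0"
      using assms(2) by simp
    ultimately show ?thesis
      by linarith
  qed
  have "(\<Sum>k\<in>UNIV. (r k)\<^sup>2) = 1"
    using \<open>w \<in> sphere 0 1\<close> power2_norm_vec[of w] by (simp add: r_def)
  then have "L = (\<Sum>k\<in>UNIV. L * (r k)\<^sup>2)"
    by (simp add: sum_distrib_left[symmetric])
  also have "\<dots> = (\<Sum>k\<in>UNIV. h k * (r k)\<^sup>2 + 2 * \<beta> * (\<rho> k)\<^sup>2 * (r k)\<^sup>2)"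
    by (rule sum.cong) (simp_all add: h_def algebra_simps)
  also have "\<dots> = (\<Sum>k\<in>UNIV. h k * (r k)\<^sup>2) + (\<Sum>k\<in>UNIV. 2 * \<beta> * (\<rho> k)\<^sup>2 * (r k)\<^sup>2)"
    by (rule sum.distrib)
  also have "\<dots> \<le> (cmod (adj_dot a w))\<^sup>2 + (\<Sum>k\<in>UNIV. \<beta> * (r k)^4 + \<beta> * (\<rho> k)^4)"
    using quadratic quartic by (intro add_mono sum_mono) (auto simp: algebra_simps)
  also have "\<dots> = 2 * fobj a \<beta> w + \<beta> * norm4_pow4 z"
    by (simp add: fobj_def norm4_pow4_def r_def \<rho>_def sum.distrib sum_distrib_left)
  finally have "L - \<beta> * norm4_pow4 z \<le> 2 * fobj a \<beta> w"
    by simp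
  moreover have "L - \<beta> * norm4_pow4 z = 2 * fobj a \<beta> z"
    by (simp add: L_def fobj_def assms(4))
  ultimately show "fobj a \<beta> z \<le> fobj a \<beta> w"
    by simp
qed

section \<open>Consistent stationary points\<close>

lemma stationary_pt_component:
  assumes "stationary_pt a \<beta> z"
  shows "adj_dot a z * a$k
           = of_real ((cmod (adj_dot a z))\<^sup>2 + 2 * \<beta> * norm4_pow4 z - 2 * \<beta> * (cmod (z$k))\<^sup>2) * z$k"
  using assms unfolding stationary_pt_def by (simp add: algebra_simps)

lemma stationary_pt_component_moduli:
  assumes "stationary_pt a \<beta> z"
  shows "adj_dot a z * (a$k * cnj (z$k))
           = of_real (((cmod (adj_dot a z))\<^sup>2 + 2 * \<beta> * norm4_pow4 z - 2 * \<beta> * (cmod (z$k))\<^sup>2)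
                      * (cmod (z$k))\<^sup>2)"
proof -
  have "adj_dot a z * (a$k * cnj (z$k)) = (adj_dot a z * a$k) * cnj (z$k)"
    by (simp only: mult.assoc)
  also have "\<dots> = of_real ((cmod (adj_dot a z))\<^sup>2 + 2 * \<beta> * norm4_pow4 z - 2 * \<beta> * (cmod (z$k))\<^sup>2)
                    * (z$k * cnj (z$k))"
    unfolding stationary_pt_component[OF assms] by (simp only: mult.assoc)
  also have "z$k * cnj (z$k) = of_real ((cmod (z$k))\<^sup>2)"
    by (rule complex_norm_square[symmetric])
  finally show ?thesis
    by (simp only: of_real_mult)
qed

lemma consistent_pt_term_real:
  assumes "consistent_pt a \<beta> z"
  shows "cnj (a$k) * z$k = of_real (Re (cnj (a$k) * z$k))"
proof (cases "a$k = 0")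
  case False
  then have "cnj (a$k) * z$k \<in> \<real>"
    using assms by (simp add: consistent_pt_def)
  then show ?thesis
    by (rule of_real_Re[symmetric])
qed simp

lemma consistent_pt_adj_dot_real:
  assumes "consistent_pt a \<beta> z"
  shows "adj_dot a z \<in> \<real>"
proof -
  have "cnj (a$k) * z$k \<in> \<real>" for k
    by (subst consistent_pt_term_real[OF assms]) (rule Reals_of_real)
  then show ?thesis
    unfolding adj_dot_def by (intro sum_in_Reals)
qed

lemma stationary_pt_balance:
  assumes "stationary_pt a \<beta> z" and "adj_dot a z = of_real c"
    and "cnj (a$k) * z$k = of_real (s * cmod (z$k))" and "z$k \<noteq> 0"
  shows "c\<^sup>2 + 2 * \<beta> * norm4_pow4 z - 2 * \<beta> * (cmod (z$k))\<^sup>2 = c * s / cmod (z$k)"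
proof -
  define h where "h = c\<^sup>2 + 2 * \<beta> * norm4_pow4 z - 2 * \<beta> * (cmod (z$k))\<^sup>2"
  have "a$k * cnj (z$k) = of_real (s * cmod (z$k))"
    using arg_cong[OF assms(3), of cnj] by (simp add: mult.commute)
  then have "c * s * cmod (z$k) = h * cmod (z$k) * cmod (z$k)"
    using stationary_pt_component_moduli[OF assms(1), of k]
    by (simp add: assms(2) h_def power2_eq_square mult.assoc flip: of_real_mult)
  then have "c * s = h * cmod (z$k)"
    using assms(4) by simp
  then show ?thesis
    using assms(4) by (simp add: h_def eq_divide_eq)
qed

lemma consistent_pt_uminus:
  assumes "consistent_pt a \<beta> z"
  shows "consistent_pt a \<beta> (- z)"
proof -
  have "stationary_pt a \<beta> z"
    using assms by (simp add: consistent_pt_def)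
  then have "stationary_pt a \<beta> (- z)"
    unfolding stationary_pt_def adj_dot_uminus norm4_pow4_uminus
    by (metis (no_types, lifting) norm_minus_cancel minus_add_distrib mult_minus_left mult_minus_right
        vector_uminus_component)
  with assms show ?thesis
    by (auto simp: consistent_pt_def)
qed

lemma local_min_coordinates_nonzero:
  fixes a z :: "complex^'n"
  assumes "\<beta> > 0" and "local_min_on (sphere 0 1) (fobj a \<beta>) z" and "stationary_pt a \<beta> z"
    and "adj_dot a z = of_real c" and "c \<noteq> 0"
  shows "z$k \<noteq> 0"
proof
  assume "z$k = 0"
  then have "a$k = 0"
    using stationary_pt_component[OF assms(3), of k] assms(4,5) by simp
  moreover have "norm z = 1"
    using assms(3) by (simp add: stationary_pt_def)
  ultimately show False
    using not_local_min_free_coordinate[OF _ assms(1)] assms(2) \<open>z$k = 0\<close> by blast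
qed

lemma global_min_if_adj_dot_pos:
  fixes a z :: "complex^'n"
  assumes "\<beta> > 0" and "local_min_on (sphere 0 1) (fobj a \<beta>) z" and "consistent_pt a \<beta> z"
    and "adj_dot a z = of_real c" and "c > 0"
  shows "global_min_on (sphere 0 1) (fobj a \<beta>) z"
proof -
  define v where "v k = Re (cnj (a$k) * z$k)" for k
  have st: "stationary_pt a \<beta> z" and nz: "norm z = 1"
    using assms(3) by (simp_all add: consistent_pt_def stationary_pt_def)
  have v: "cnj (a$k) * z$k = of_real (v k)" for k
    unfolding v_def by (rule consistent_pt_term_real[OF assms(3)])
  have abs_v: "\<bar>v k\<bar> = cmod (a$k) * cmod (z$k)" for k
    using arg_cong[OF v[of k], of cmod] by (simp add: norm_mult)
  have nonzero: "z$k \<noteq> 0" for k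
    using local_min_coordinates_nonzero[OF assms(1,2) st assms(4)] assms(5) by simp
  have "complex_of_real (\<Sum>k\<in>UNIV. v k) = complex_of_real c"
    unfolding of_real_sum using assms(4) by (simp add: adj_dot_def v)
  then have sum_v: "(\<Sum>k\<in>UNIV. v k) = c"
    by (simp only: of_real_eq_iff)
  obtain p where "v p > 0"
    using sum_nonpos[of UNIV v] sum_v assms(5) by (meson linorder_not_le)
  have v_p: "v p = cmod (a$p) * cmod (z$p)"
    using abs_v[of p] \<open>v p > 0\<close> by simp
  have v_others: "v k = - (cmod (a$k) * cmod (z$k))" if "k \<noteq> p" for k
  proof -
    have "v k \<le> 0"
      using not_local_min_two_positive_terms[OF nz assms(4,5) that v v] \<open>v p > 0\<close> assms(2)
      by (meson not_le)
    then show ?thesis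
      using abs_v[of k] by simp
  qed
  show ?thesis
  proof (rule global_min_certificate[where p = p, OF _ nz assms(4,5) nonzero])
    show "\<beta> \<ge> 0"
      using assms(1) by simp
    have "c = v p + (\<Sum>k\<in>UNIV - {p}. v k)"
      using sum_v sum.remove[of UNIV p v] by simp
    then show "cmod (a$p) * cmod (z$p) = c + (\<Sum>k\<in>UNIV - {p}. cmod (a$k) * cmod (z$k))"
      by (simp add: v_p v_others sum_negf)
    show "c\<^sup>2 + 2 * \<beta> * norm4_pow4 z - 2 * \<beta> * (cmod (z$p))\<^sup>2 = c * cmod (a$p) / cmod (z$p)"
      using v[of p] v_p by (intro stationary_pt_balance[OF st assms(4) _ nonzero]) (simp add: mult.commute)
    show "c\<^sup>2 + 2 * \<beta> * norm4_pow4 z - 2 * \<beta> * (cmod (z$k))\<^sup>2 = - c * cmod (a$k) / cmod (z$k)"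
      if "k \<noteq> p" for k
      using v[of k] v_others[OF that] stationary_pt_balance[OF st assms(4) _ nonzero, of k "- cmod (a$k)"]
      by (simp add: mult.commute)
  qed
qed

lemma global_min_if_adj_dot_nonzero:
  fixes a z :: "complex^'n"
  assumes "\<beta> > 0" and "local_min_on (sphere 0 1) (fobj a \<beta>) z" and "consistent_pt a \<beta> z"
    and "adj_dot a z = of_real c" and "c \<noteq> 0"
  shows "global_min_on (sphere 0 1) (fobj a \<beta>) z"
proof (cases "c > 0")
  case True
  then show ?thesis
    by (rule global_min_if_adj_dot_pos[OF assms(1-4)])
next
  case False
  have symmetric: "fobj a \<beta> (- w) = fobj a \<beta> w" "w \<in> sphere 0 1 \<Longrightarrow> - w \<in> sphere 0 1" for w
    by (simp_all add: fobj_uminus)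
  have "adj_dot a (- z) = of_real (- c)" and "- c > 0"
    using assms(4,5) False by (simp_all add: adj_dot_uminus)
  from global_min_if_adj_dot_pos[OF assms(1) local_min_on_uminus[OF symmetric(1,2) assms(2)]
         consistent_pt_uminus[OF assms(3)] this]
  show ?thesis
    by (rule global_min_on_uminus[rotated 2]) (simp_all add: fobj_uminus)
qed

lemma dominant_coordinate:
  fixes a :: "complex^'n"
  assumes "norm_inf a > norm1 a / 2"
  obtains m where "(\<Sum>k\<in>UNIV - {m}. cmod (a$k)) < cmod (a$m)"
proof -
  have "norm_inf a \<in> range (\<lambda>k. cmod (a$k))"
    unfolding norm_inf_def by (rule Max_in) auto
  then obtain m where m: "norm_inf a = cmod (a$m)"
    by auto
  have "norm1 a = cmod (a$m) + (\<Sum>k\<in>UNIV - {m}. cmod (a$k))"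
    unfolding norm1_def by (simp add: sum.remove)
  with assms m that show ?thesis
    by simp
qed

lemma adj_dot_nonzero_if_dominant:
  fixes a z :: "complex^'n"
  assumes "(\<Sum>k\<in>UNIV - {m}. cmod (a$k)) < cmod (a$m)"
    and "z$m \<noteq> 0" and "\<And>k. cmod (z$k) \<le> cmod (z$m)"
  shows "adj_dot a z \<noteq> 0"
proof
  assume "adj_dot a z = 0"
  then have "cmod (cnj (a$m) * z$m) = cmod (\<Sum>k\<in>UNIV - {m}. cnj (a$k) * z$k)"
    unfolding adj_dot_split[of a z m] by (simp add: add_eq_0_iff2 norm_minus_cancel)
  also have "\<dots> \<le> (\<Sum>k\<in>UNIV - {m}. cmod (a$k) * cmod (z$m))"
    by (rule order_trans[OF norm_sum sum_mono]) (simp add: norm_mult assms(3) mult_left_mono)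
  also have "\<dots> < cmod (a$m) * cmod (z$m)"
    using assms(1,2) by (simp add: sum_distrib_right[symmetric])
  finally show False
    by (simp add: norm_mult)
qed

lemma stationary_adj_dot_zero_moduli:
  assumes "stationary_pt a \<beta> z" and "\<beta> > 0" and "adj_dot a z = 0"
  shows "z$k = 0 \<or> (cmod (z$k))\<^sup>2 = norm4_pow4 z"
  using stationary_pt_component[OF assms(1), of k] assms(2,3) by (auto simp flip: of_real_power)

lemma stationary_adj_dot_zero_dominant_vanishes:
  fixes a z :: "complex^'n"
  assumes "stationary_pt a \<beta> z" and "\<beta> > 0" and "adj_dot a z = 0"
    and "(\<Sum>k\<in>UNIV - {m}. cmod (a$k)) < cmod (a$m)"
  shows "z$m = 0"
proof (rule ccontr)
  assume "z$m \<noteq> 0"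
  then have "cmod (z$k) \<le> cmod (z$m)" for k
    using stationary_adj_dot_zero_moduli[OF assms(1-3), of k]
      stationary_adj_dot_zero_moduli[OF assms(1-3), of m]
    by (auto intro: power2_le_imp_le)
  with adj_dot_nonzero_if_dominant[OF assms(4) \<open>z$m \<noteq> 0\<close>] assms(3) show False
    by blast
qed

lemma equal_moduli_off_coordinate:
  fixes z :: "complex^'n"
  assumes "norm z = 1" and "z$m = 0" and "\<And>k. k \<noteq> m \<Longrightarrow> (cmod (z$k))\<^sup>2 = Q"
  shows "(real CARD('n) - 1) * Q = 1"
proof -
  have "1 = (\<Sum>k\<in>UNIV. (cmod (z$k))\<^sup>2)"
    using power2_norm_vec[of z] assms(1) by simp
  also have "\<dots> = (\<Sum>k\<in>UNIV - {m}. (cmod (z$k))\<^sup>2)"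
    using assms(2) sum.remove[of UNIV m "\<lambda>k. (cmod (z$k))\<^sup>2"] by simp
  also have "\<dots> = (\<Sum>k\<in>UNIV - {m}. Q)"
    using assms(3) by (intro sum.cong) auto
  also have "\<dots> = (real CARD('n) - 1) * Q"
    by (simp add: card_Diff_singleton of_nat_diff)
  finally show ?thesis
    by simp
qed

lemma local_min_support_at_zero_coordinate:
  fixes a z :: "complex^'n"
  assumes "norm z = 1" and "\<beta> > 0" and "local_min_on (sphere 0 1) (fobj a \<beta>) z"
    and "z$m = 0" and "a$m \<noteq> 0" and "k \<noteq> m"
  shows "a$k = 0"
proof (rule ccontr)
  assume "a$k \<noteq> 0"
  show False
  proof (cases "z$k = 0")
    case True
    with not_local_min_two_zero_coordinates[OF assms(1,2,4) _ assms(6) \<open>a$k \<noteq> 0\<close>] assms(3)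
    show False by blast
  next
    case False
    with not_local_min_phase_compensation[OF assms(1,2,4,5,6)] assms(3) \<open>a$k \<noteq> 0\<close>
    show False by simp
  qed
qed

lemma not_local_min_adj_dot_zero:
  fixes a z :: "complex^'n"
  assumes "CARD('n) \<ge> 2" and "\<beta> > 0" and dominant: "(\<Sum>k\<in>UNIV - {m}. cmod (a$k)) < cmod (a$m)"
    and "\<not> (card {k. a$k \<noteq> 0} = 1 \<and> (norm a)\<^sup>2 \<ge> 2 * \<beta> / (real CARD('n) - 1))"
    and "stationary_pt a \<beta> z" and "adj_dot a z = 0"
  shows "\<not> local_min_on (sphere 0 1) (fobj a \<beta>) z"
proof
  assume lm: "local_min_on (sphere 0 1) (fobj a \<beta>) z"
  have nz: "norm z = 1"
    using assms(5) by (simp add: stationary_pt_def)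
  have "z$m = 0"
    by (rule stationary_adj_dot_zero_dominant_vanishes[OF assms(5,2,6) dominant])
  have "a$m \<noteq> 0"
    using dominant sum_nonneg[of "UNIV - {m}" "\<lambda>k. cmod (a$k)"] by auto
  have free: "z$k \<noteq> 0" if "a$k = 0" for k
    using not_local_min_free_coordinate[OF nz assms(2) that] lm by blast
  have a_single: "a$k = 0" if "k \<noteq> m" for k
    using local_min_support_at_zero_coordinate[OF nz assms(2) lm \<open>z$m = 0\<close> \<open>a$m \<noteq> 0\<close> that] .
  have "(real CARD('n) - 1) * norm4_pow4 z = 1"
    using stationary_adj_dot_zero_moduli[OF assms(5,2,6)] free a_single
    by (intro equal_moduli_off_coordinate[OF nz \<open>z$m = 0\<close>]) blast
  moreover have "real CARD('n) - 1 > 0"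
    using assms(1) by simp
  ultimately have "2 * \<beta> / (real CARD('n) - 1) = 2 * \<beta> * norm4_pow4 z"
    by (simp add: divide_simps mult.commute)
  moreover have "{k. a$k \<noteq> 0} = {m}"
    using a_single \<open>a$m \<noteq> 0\<close> by auto
  moreover have "(norm a)\<^sup>2 = (cmod (a$m))\<^sup>2"
    using a_single sum.remove[of UNIV m "\<lambda>k. (cmod (a$k))\<^sup>2"] by (simp add: power2_norm_vec)
  ultimately have "(cmod (a$m))\<^sup>2 < 2 * \<beta> * norm4_pow4 z"
    using assms(4) by simp
  with not_local_min_single_coordinate[OF nz assms(2,6) \<open>z$m = 0\<close>] lm show False
    by blast
qed

theorem theorem11:
  fixes a z :: "complex^'n" and \<beta> :: real
  assumes "CARD('n) \<ge> 2"
    and "\<beta> > 0"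
    and "norm_inf a > norm1 a / 2"
    and "\<not> (card {k. a$k \<noteq> 0} = 1 \<and> (norm a)^2 \<ge> 2 * \<beta> / (real CARD('n) - 1))"
    and "local_min_on (sphere 0 1) (fobj a \<beta>) z"
    and "consistent_pt a \<beta> z"
  shows "global_min_on (sphere 0 1) (fobj a \<beta>) z"
proof -
  obtain m where dominant: "(\<Sum>k\<in>UNIV - {m}. cmod (a$k)) < cmod (a$m)"
    using dominant_coordinate[OF assms(3)] .
  obtain c where c: "adj_dot a z = of_real c"
    using consistent_pt_adj_dot_real[OF assms(6)] by (auto elim: Reals_cases)
  have "stationary_pt a \<beta> z"
    using assms(6) by (simp add: consistent_pt_def)
  show ?thesis
  proof (cases "c = 0")
    case True
    with not_local_min_adj_dot_zero[OF assms(1,2) dominant assms(4) \<open>stationary_pt a \<beta> z\<close>] c assms(5)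
    show ?thesis
      by simp
  next
    case False
    with global_min_if_adj_dot_nonzero[OF assms(2,5,6) c] show ?thesis .
  qed
qed

end
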